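(* Let $T_1,T_2$ be tables joined on column $J$ with frequencies $a_v,b_v$ ($v\in\mathcal U$) such that $\gamma_{1,1}=\sum_v a_vb_v>0$, and let $\epsilon_1,\epsilon_2\in(0,1]$. Among all UBS parameters $(p_1,q_1),(p_2,q_2)\in(0,1]^2$ with $p_1q_1=\epsilon_1$ and $p_2q_2=\epsilon_2$, the variance of $\hat J_{\mathrm{count}}=\frac{1}{\min\{p_1,p_2\}q_1q_2}|S_1\bowtie_J S_2|$ (with $S_i=\mathrm{UBS}_{p_i,q_i}(T_i,J)$) is minimized by $$p_1=p_2=p:=\min\Big\{1,\max\Big\{\epsilon_1,\epsilon_2,\sqrt{\frac{\epsilon_1\epsilon_2(\gamma_{2,2}-\gamma_{1,2}-\gamma_{2,1}+\gamma_{1,1})}{\gamma_{1,1}}}\Big\}\Big\},\qquad q_1=\epsilon_1/p,\ q_2=\epsilon_2/p,$$ where $\gamma_{i,j}=\sum_{v\in\mathcal U}a_v^ib_v^j$.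
   Context: $T_1,T_2$ are finite multisets of tuples with a join attribute $J$ taking values in a finite set $\mathcal U$; $a_v$ (resp. $b_v$) is the number of tuples of $T_1$ (resp. $T_2$) with $J$-value $v$. $S_1\bowtie_J S_2$ is the set of pairs $(t_1,t_2)\in S_1\times S_2$ with $t_1.J=t_2.J$. $\mathrm{UBS}_{p,q}(T,J)$: given a hash function $h:\mathcal U\to[0,1]$, each tuple $t\in T$ with $h(t.J)<p$ is included independently with probability $q$; others are excluded. The values $h(v)$ are independent uniform on $[0,1]$, the same $h$ is used for both tables, and the Bernoulli coins are independent across all tuples and independent of $h$. *)

theory Defs
  imports "HOL-Probability.Probability"
begin

text \<open>Tables are given by their join-value frequencies a, b :: 'u => nat over a finite
universe 'u.  The tuples of T1 with J-value v are indexed by (v,i) with i < a v,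
similarly for T2.\<close>

definition tuples :: "('u \<Rightarrow> nat) \<Rightarrow> ('u \<times> nat) set" where
  "tuples a = {(v, i). i < a v}"

definition gamma :: "('u::finite \<Rightarrow> nat) \<Rightarrow> ('u \<Rightarrow> nat) \<Rightarrow> nat \<Rightarrow> nat \<Rightarrow> real" where
  "gamma a b i j = (\<Sum>v\<in>UNIV. real (a v) ^ i * real (b v) ^ j)"

definition UBS :: "('u \<Rightarrow> nat) \<Rightarrow> real \<Rightarrow> ('u \<Rightarrow> real) \<Rightarrow> ('u \<times> nat \<Rightarrow> bool) \<Rightarrow> ('u \<times> nat) set" where
  "UBS a p h c = {t \<in> tuples a. h (fst t) < p \<and> c t}"

definition join :: "('u \<times> nat) set \<Rightarrow> ('u \<times> nat) set \<Rightarrow> (('u \<times> nat) \<times> ('u \<times> nat)) set" where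
  "join S1 S2 = {(t1, t2) \<in> S1 \<times> S2. fst t1 = fst t2}"

text \<open>Joint probability space: independent uniform hash values on [0,1] (shared by both
tables), independent Bernoulli(q1) coins for the tuples of T1 and Bernoulli(q2) coins
for the tuples of T2.\<close>
definition ubs_space :: "('u::finite \<Rightarrow> nat) \<Rightarrow> ('u \<Rightarrow> nat) \<Rightarrow> real \<Rightarrow> real \<Rightarrow>
    (('u \<Rightarrow> real) \<times> ('u \<times> nat \<Rightarrow> bool) \<times> ('u \<times> nat \<Rightarrow> bool)) measure" where
  "ubs_space a b q1 q2 =
     (PiM UNIV (\<lambda>_. uniform_measure lborel {0..1::real}))
     \<Otimes>\<^sub>M ((PiM (tuples a) (\<lambda>_. measure_pmf (bernoulli_pmf q1)))
     \<Otimes>\<^sub>M (PiM (tuples b) (\<lambda>_. measure_pmf (bernoulli_pmf q2))))"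

definition J_count :: "('u \<Rightarrow> nat) \<Rightarrow> ('u \<Rightarrow> nat) \<Rightarrow> real \<Rightarrow> real \<Rightarrow> real \<Rightarrow> real \<Rightarrow>
    (('u \<Rightarrow> real) \<times> ('u \<times> nat \<Rightarrow> bool) \<times> ('u \<times> nat \<Rightarrow> bool)) \<Rightarrow> real" where
  "J_count a b p1 q1 p2 q2 \<omega> =
     (case \<omega> of (h, c1, c2) \<Rightarrow>
        real (card (join (UBS a p1 h c1) (UBS b p2 h c2))) / (min p1 p2 * q1 * q2))"

definition var_J_count :: "('u::finite \<Rightarrow> nat) \<Rightarrow> ('u \<Rightarrow> nat) \<Rightarrow> real \<Rightarrow> real \<Rightarrow> real \<Rightarrow> real \<Rightarrow> real" where
  "var_J_count a b p1 q1 p2 q2 =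
     prob_space.variance (ubs_space a b q1 q2) (J_count a b p1 q1 p2 q2)"

end

theory Submission
  imports Defs
begin

(* With m = min p1 p2, the join size is the sum over join values v of [h v < m] * A_v * B_v,
   where A_v and B_v count the sampled tuples of T1 and T2 with value v.  These summands are
   pairwise uncorrelated, and their first two moments factor over the hash values and the two
   coin families, which gives
     Var = (sum_v (a_v^2 + a_v/q1 - a_v) (b_v^2 + b_v/q2 - b_v)) / m - gamma_22.
   Under the budgets p_i q_i = eps_i this is max p1 p2 * sum_v w(a_v, eps1, p1) w(b_v, eps2, p2)
   - gamma_22 with w(n, eps, p) = n/eps + (n^2 - n)/p antitone in p, so raising both p_i to
   t = max p1 p2 can only decrease the variance.  On the diagonal p1 = p2 = t the variance is
   alpha t + c/t + const with alpha = gamma_11/(eps1 eps2) and c = gamma_22 - gamma_12 - gamma_21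
   + gamma_11 >= 0, which on [max eps1 eps2, 1] is minimal at sqrt (c/alpha) clamped into that
   interval. *)

section \<open>Moments on product probability spaces\<close>

lemma integrable_bounded_prob:
  fixes f :: "'a \<Rightarrow> real"
  assumes "prob_space M" "f \<in> borel_measurable M" "\<And>x. \<bar>f x\<bar> \<le> B"
  shows "integrable M f"
proof -
  interpret prob_space M by fact
  show ?thesis using assms by (intro integrable_const_bound[where B=B]) auto
qed

lemma integral_PiM_component:
  fixes f :: "'b \<Rightarrow> real"
  assumes "\<And>i. i \<in> I \<Longrightarrow> prob_space (M i)" "i \<in> I" "f \<in> borel_measurable (M i)"
  shows "(\<integral>\<omega>. f (\<omega> i) \<partial>PiM I M) = integral\<^sup>L (M i) f"
proof -
  have "(\<integral>\<omega>. f (\<omega> i) \<partial>PiM I M) = integral\<^sup>L (distr (PiM I M) (M i) (\<lambda>\<omega>. \<omega> i)) f"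
    using assms by (simp add: integral_distr)
  also have "\<dots> = integral\<^sup>L (M i) f"
    using assms by (simp add: distr_PiM_component)
  finally show ?thesis .
qed

lemma integral_PiM_components_mult:
  fixes f g :: "'b \<Rightarrow> real"
  assumes N: "prob_space N" and I: "finite I" "i \<in> I" "j \<in> I" "i \<noteq> j"
    and f: "integrable N f" and g: "integrable N g"
  shows "(\<integral>\<omega>. f (\<omega> i) * g (\<omega> j) \<partial>PiM I (\<lambda>_. N)) = integral\<^sup>L N f * integral\<^sup>L N g"
proof -
  interpret product_prob_space "\<lambda>_. N" I
    using N by (simp add: product_prob_space_def product_sigma_finite_def prob_space_imp_sigma_finite
        product_prob_space_axioms_def)
  define F where "F t x = (if t = i then f x else 1) * (if t = j then g x else 1)" for t x
  have F: "F t = (if t = i then f else if t = j then g else (\<lambda>_. 1))" for t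
    using I by (auto simp: F_def fun_eq_iff)
  have "(\<integral>\<omega>. f (\<omega> i) * g (\<omega> j) \<partial>PiM I (\<lambda>_. N))
      = (\<integral>\<omega>. (\<Prod>t\<in>I. F t (\<omega> t)) \<partial>PiM I (\<lambda>_. N))"
    using I by (simp add: F_def prod.distrib prod.delta)
  also have "\<dots> = (\<Prod>t\<in>I. integral\<^sup>L N (F t))"
    using I f g by (intro product_integral_prod) (simp_all add: F)
  also have "\<dots> = integral\<^sup>L N f * integral\<^sup>L N g"
  proof -
    have "integral\<^sup>L N (F t) = (if t = i then integral\<^sup>L N f else 1) * (if t = j then integral\<^sup>L N g else 1)" for t
      using I by (simp add: F prob_space.prob_space[OF N])
    then show ?thesis using I by (simp add: prod.distrib prod.delta)
  qed
  finally show ?thesis .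
qed

lemma
  fixes f :: "'a \<Rightarrow> real" and g :: "'b \<Rightarrow> real"
  assumes A: "prob_space A" and B: "prob_space B"
    and f: "f \<in> borel_measurable A" "\<And>x. \<bar>f x\<bar> \<le> Cf"
    and g: "g \<in> borel_measurable B" "\<And>y. \<bar>g y\<bar> \<le> Cg"
  shows integrable_pair_measure_mult: "integrable (A \<Otimes>\<^sub>M B) (\<lambda>\<omega>. f (fst \<omega>) * g (snd \<omega>))"
    and integral_pair_measure_mult:
      "(\<integral>\<omega>. f (fst \<omega>) * g (snd \<omega>) \<partial>(A \<Otimes>\<^sub>M B)) = integral\<^sup>L A f * integral\<^sup>L B g"
proof -
  interpret pair_sigma_finite A B
    using A B by (simp add: pair_sigma_finite_def prob_space_imp_sigma_finite)
  have "\<bar>f (fst \<omega>)\<bar> * \<bar>g (snd \<omega>)\<bar> \<le> Cf * Cg" for \<omega>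
    using f(2) g(2) by (intro mult_mono) (auto intro: order_trans[OF abs_ge_zero])
  then show int: "integrable (A \<Otimes>\<^sub>M B) (\<lambda>\<omega>. f (fst \<omega>) * g (snd \<omega>))"
    using f(1) g(1) by (intro integrable_bounded_prob[OF prob_space_pair[OF A B]]) (auto simp: abs_mult)
  show "(\<integral>\<omega>. f (fst \<omega>) * g (snd \<omega>) \<partial>(A \<Otimes>\<^sub>M B)) = integral\<^sup>L A f * integral\<^sup>L B g"
    using integral_fst'[OF int] by simp
qed

lemma
  fixes f :: "'a \<Rightarrow> real" and g :: "'b \<Rightarrow> real" and k :: "'c \<Rightarrow> real"
  assumes A: "prob_space A" and B: "prob_space B" and C: "prob_space C"
    and f: "f \<in> borel_measurable A" "\<And>x. \<bar>f x\<bar> \<le> Cf"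
    and g: "g \<in> borel_measurable B" "\<And>y. \<bar>g y\<bar> \<le> Cg"
    and k: "k \<in> borel_measurable C" "\<And>z. \<bar>k z\<bar> \<le> Ck"
  shows integrable_pair_measure_mult3:
      "integrable (A \<Otimes>\<^sub>M (B \<Otimes>\<^sub>M C)) (\<lambda>\<omega>. f (fst \<omega>) * (g (fst (snd \<omega>)) * k (snd (snd \<omega>))))"
    and integral_pair_measure_mult3:
      "(\<integral>\<omega>. f (fst \<omega>) * (g (fst (snd \<omega>)) * k (snd (snd \<omega>))) \<partial>(A \<Otimes>\<^sub>M (B \<Otimes>\<^sub>M C)))
        = integral\<^sup>L A f * (integral\<^sup>L B g * integral\<^sup>L C k)"
proof -
  define gk where "gk y = g (fst y) * k (snd y)" for y
  have gk: "gk \<in> borel_measurable (B \<Otimes>\<^sub>M C)" "\<bar>gk y\<bar> \<le> Cg * Ck" for y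
    unfolding gk_def using g k by (auto simp: abs_mult intro: mult_mono order_trans[OF abs_ge_zero])
  show "integrable (A \<Otimes>\<^sub>M (B \<Otimes>\<^sub>M C)) (\<lambda>\<omega>. f (fst \<omega>) * (g (fst (snd \<omega>)) * k (snd (snd \<omega>))))"
    using integrable_pair_measure_mult[OF A prob_space_pair[OF B C] f gk] by (simp add: gk_def)
  show "(\<integral>\<omega>. f (fst \<omega>) * (g (fst (snd \<omega>)) * k (snd (snd \<omega>))) \<partial>(A \<Otimes>\<^sub>M (B \<Otimes>\<^sub>M C)))
      = integral\<^sup>L A f * (integral\<^sup>L B g * integral\<^sup>L C k)"
    using integral_pair_measure_mult[OF A prob_space_pair[OF B C] f gk]
      integral_pair_measure_mult[OF B C g k] by (simp add: gk_def)
qed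

lemma (in prob_space) variance_divide:
  fixes X :: "'a \<Rightarrow> real"
  shows "variance (\<lambda>x. X x / c) = variance X / c\<^sup>2"
proof -
  have "(\<lambda>x. (X x / c - expectation (\<lambda>x. X x / c))\<^sup>2) = (\<lambda>x. (X x - expectation X)\<^sup>2 / c\<^sup>2)"
    by (simp add: fun_eq_iff power_divide diff_divide_distrib[symmetric])
  then show ?thesis by simp
qed

lemma (in prob_space) variance_sum_uncorrelated:
  fixes X :: "'i \<Rightarrow> 'a \<Rightarrow> real"
  assumes I: "finite I"
    and int: "\<And>i. i \<in> I \<Longrightarrow> integrable M (X i)"
    and int2: "\<And>i j. i \<in> I \<Longrightarrow> j \<in> I \<Longrightarrow> integrable M (\<lambda>x. X i x * X j x)"
    and uncorrelated: "\<And>i j. i \<in> I \<Longrightarrow> j \<in> I \<Longrightarrow> i \<noteq> j \<Longrightarrow>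
      expectation (\<lambda>x. X i x * X j x) = expectation (X i) * expectation (X j)"
  shows "variance (\<lambda>x. \<Sum>i\<in>I. X i x) = (\<Sum>i\<in>I. variance (X i))"
proof -
  have square: "(\<lambda>x. (\<Sum>i\<in>I. X i x)\<^sup>2) = (\<lambda>x. \<Sum>i\<in>I. \<Sum>j\<in>I. X i x * X j x)"
    by (simp add: power2_eq_square sum_product)
  have covariance: "expectation (\<lambda>x. X i x * X j x)
      = expectation (X i) * expectation (X j) + (if i = j then variance (X i) else 0)"
    if "i \<in> I" "j \<in> I" for i j
    using uncorrelated[OF that] variance_eq[OF int int2[of i i, folded power2_eq_square]] that
    by (cases "i = j") (simp_all add: power2_eq_square)
  have "expectation (\<lambda>x. (\<Sum>i\<in>I. X i x)\<^sup>2) = (\<Sum>i\<in>I. \<Sum>j\<in>I. expectation (\<lambda>x. X i x * X j x))"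
    by (simp add: square int2)
  also have "\<dots> = (\<Sum>i\<in>I. expectation (X i))\<^sup>2 + (\<Sum>i\<in>I. variance (X i))"
    by (simp add: covariance sum.distrib power2_eq_square sum_product I cong: sum.cong)
  finally have "expectation (\<lambda>x. (\<Sum>i\<in>I. X i x)\<^sup>2)
      = (\<Sum>i\<in>I. expectation (X i))\<^sup>2 + (\<Sum>i\<in>I. variance (X i))" .
  moreover have "expectation (\<lambda>x. \<Sum>i\<in>I. X i x) = (\<Sum>i\<in>I. expectation (X i))"
    by (simp add: int)
  moreover have "variance (\<lambda>x. \<Sum>i\<in>I. X i x)
      = expectation (\<lambda>x. (\<Sum>i\<in>I. X i x)\<^sup>2) - (expectation (\<lambda>x. \<Sum>i\<in>I. X i x))\<^sup>2"
    by (rule variance_eq) (simp_all add: square int int2)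
  ultimately show ?thesis by simp
qed

section \<open>Moments of the hash values and the coins\<close>

abbreviation hash_space :: "('u::finite \<Rightarrow> real) measure" where
  "hash_space \<equiv> PiM UNIV (\<lambda>_. uniform_measure lborel {0..1})"

abbreviation coin_space :: "('u \<Rightarrow> nat) \<Rightarrow> real \<Rightarrow> ('u \<times> nat \<Rightarrow> bool) measure" where
  "coin_space a q \<equiv> PiM (tuples a) (\<lambda>_. measure_pmf (bernoulli_pmf q))"

lemma prob_space_uniform_unit: "prob_space (uniform_measure lborel {0..1::real})"
  by (rule prob_space_uniform_measure) auto

lemma prob_space_hash_space: "prob_space hash_space"
  by (intro prob_space_PiM prob_space_uniform_unit)

lemma prob_space_coin_space: "prob_space (coin_space a q)"
  by (intro prob_space_PiM prob_space_measure_pmf)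

lemma finite_tuples: "finite (tuples (a :: 'u::finite \<Rightarrow> nat))"
proof -
  have "tuples a = (SIGMA v:UNIV. {..<a v})" by (auto simp: tuples_def)
  then show ?thesis by simp
qed

lemma integral_uniform_below:
  assumes "0 \<le> m" "m \<le> 1"
  shows "(\<integral>x. of_bool (x < m) \<partial>uniform_measure lborel {0..1::real}) = m"
proof -
  have "(\<lambda>x. of_bool (x < m) :: real) = indicator {..<m}" by (auto simp: indicator_def)
  moreover have "{0..1} \<inter> {..<m} = {0..<m}" using assms by auto
  ultimately show ?thesis using assms by (simp add: measure_def divide_ennreal_def)
qed

lemma integral_hash_below:
  assumes "0 \<le> m" "m \<le> 1"
  shows "(\<integral>h. of_bool (h v < m) \<partial>(hash_space :: ('u::finite \<Rightarrow> real) measure)) = m"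
  using assms by (subst integral_PiM_component) (simp_all add: prob_space_uniform_unit integral_uniform_below)

lemma integral_hash_below_mult:
  assumes "0 \<le> m" "m \<le> 1"
  shows "(\<integral>h. of_bool (h v < m) * of_bool (h w < m) \<partial>(hash_space :: ('u::finite \<Rightarrow> real) measure))
    = (if v = w then m else m\<^sup>2)"
proof (cases "v = w")
  case True
  then show ?thesis using integral_hash_below[OF assms] by (simp flip: of_bool_conj)
next
  case False
  have "integrable (uniform_measure lborel {0..1::real}) (\<lambda>x. of_bool (x < m) :: real)"
    by (rule integrable_bounded_prob[OF prob_space_uniform_unit, where B=1]) auto
  then have "(\<integral>h. (of_bool (h v < m) :: real) * of_bool (h w < m) \<partial>(hash_space :: ('u \<Rightarrow> real) measure))
      = (\<integral>x. of_bool (x < m) \<partial>uniform_measure lborel {0..1})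
        * (\<integral>x. of_bool (x < m) \<partial>uniform_measure lborel {0..1})"
    using False
    by (intro integral_PiM_components_mult[where f="\<lambda>x. of_bool (x < m)" and g="\<lambda>x. of_bool (x < m)"
          and i=v and j=w, OF prob_space_uniform_unit]) auto
  then show ?thesis
    using False assms by (simp add: integral_uniform_below power2_eq_square)
qed

lemma integral_coin:
  assumes "s \<in> tuples a" "0 \<le> q" "q \<le> 1"
  shows "(\<integral>c. of_bool (c s) \<partial>coin_space a q) = q"
  using assms by (subst integral_PiM_component) (simp_all add: prob_space_measure_pmf)

lemma integral_coin_mult:
  fixes a :: "'u::finite \<Rightarrow> nat"
  assumes "s \<in> tuples a" "t \<in> tuples a" "0 \<le> q" "q \<le> 1"
  shows "(\<integral>c. of_bool (c s) * of_bool (c t) \<partial>coin_space a q) = (if s = t then q else q\<^sup>2)"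
proof (cases "s = t")
  case True
  then show ?thesis using integral_coin[OF assms(1,3,4)] by (simp flip: of_bool_conj)
next
  case False
  have "integrable (measure_pmf (bernoulli_pmf q)) (\<lambda>x. of_bool x :: real)"
    by (rule integrable_bounded_prob[OF prob_space_measure_pmf, where B=1]) auto
  then have "(\<integral>c. (of_bool (c s) :: real) * of_bool (c t) \<partial>coin_space a q)
      = (\<integral>x. of_bool x \<partial>bernoulli_pmf q) * (\<integral>x. of_bool x \<partial>bernoulli_pmf q)"
    using False assms
    by (intro integral_PiM_components_mult[where f=of_bool and g=of_bool and i=s and j=t,
          OF prob_space_measure_pmf finite_tuples]) auto
  then show ?thesis
    using False assms by (simp add: power2_eq_square)
qed

definition coin_count :: "('u \<Rightarrow> nat) \<Rightarrow> 'u \<Rightarrow> ('u \<times> nat \<Rightarrow> bool) \<Rightarrow> real" where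
  "coin_count a v c = (\<Sum>i<a v. of_bool (c (v, i)))"

lemma coin_count_eq_card: "coin_count a v c = real (card {i. i < a v \<and> c (v, i)})"
proof -
  have "{i. i < a v \<and> c (v, i)} = {i \<in> {..<a v}. c (v, i)}" by auto
  then show ?thesis by (simp add: coin_count_def sum.inter_filter[symmetric] of_bool_def)
qed

lemma coin_count_bounded: "\<bar>coin_count a v c\<bar> \<le> real (a v)"
proof -
  have "card {i. i < a v \<and> c (v, i)} \<le> card {..<a v}" by (intro card_mono) auto
  then show ?thesis by (simp add: coin_count_eq_card)
qed

lemma measurable_coin_count: "coin_count a v \<in> borel_measurable (coin_space a q)"
  unfolding coin_count_def[abs_def] by measurable (simp add: tuples_def)

lemma integrable_coin:
  assumes "s \<in> tuples a"
  shows "integrable (coin_space a q) (\<lambda>c. of_bool (c s) :: real)"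
  using assms by (intro integrable_bounded_prob[OF prob_space_coin_space, where B=1]) auto

lemma integrable_coin_mult:
  assumes "s \<in> tuples a" "t \<in> tuples a"
  shows "integrable (coin_space a q) (\<lambda>c. of_bool (c s) * of_bool (c t) :: real)"
  using assms by (intro integrable_bounded_prob[OF prob_space_coin_space, where B=1]) auto

lemma integral_coin_count:
  fixes a :: "'u::finite \<Rightarrow> nat"
  assumes "0 \<le> q" "q \<le> 1"
  shows "(\<integral>c. coin_count a v c \<partial>coin_space a q) = real (a v) * q"
proof -
  have tuple: "(v, i) \<in> tuples a" if "i < a v" for i using that by (simp add: tuples_def)
  have "(\<integral>c. coin_count a v c \<partial>coin_space a q)
      = (\<Sum>i<a v. \<integral>c. of_bool (c (v, i)) \<partial>coin_space a q)"
    unfolding coin_count_def by (intro Bochner_Integration.integral_sum integrable_coin tuple) simp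
  also have "\<dots> = (\<Sum>i<a v. q)"
    using assms tuple by (intro sum.cong) (simp_all add: integral_coin)
  finally show ?thesis by simp
qed

lemma integral_coin_count_mult:
  fixes a :: "'u::finite \<Rightarrow> nat"
  assumes "0 \<le> q" "q \<le> 1"
  shows "(\<integral>c. coin_count a v c * coin_count a w c \<partial>coin_space a q)
    = real (a v) * real (a w) * q\<^sup>2 + (if v = w then real (a v) * q * (1 - q) else 0)"
proof -
  have tuple: "(u, i) \<in> tuples a" if "i < a u" for u i using that by (simp add: tuples_def)
  have "(\<integral>c. coin_count a v c * coin_count a w c \<partial>coin_space a q)
      = (\<Sum>i<a v. \<integral>c. (\<Sum>j<a w. of_bool (c (v, i)) * of_bool (c (w, j))) \<partial>coin_space a q)"
    unfolding coin_count_def sum_product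
    by (intro Bochner_Integration.integral_sum Bochner_Integration.integrable_sum
        integrable_coin_mult tuple) simp_all
  also have "\<dots> = (\<Sum>i<a v. \<Sum>j<a w. \<integral>c. of_bool (c (v, i)) * of_bool (c (w, j)) \<partial>coin_space a q)"
    by (intro sum.cong refl Bochner_Integration.integral_sum integrable_coin_mult tuple) simp_all
  also have "\<dots> = (\<Sum>i<a v. \<Sum>j<a w. q\<^sup>2 + (if v = w \<and> i = j then q - q\<^sup>2 else 0))"
    using assms tuple by (intro sum.cong) (simp_all add: integral_coin_mult)
  also have "\<dots> = real (a v) * real (a w) * q\<^sup>2 + (if v = w then real (a v) * q * (1 - q) else 0)"
    by (simp add: sum.distrib sum.If_cases algebra_simps power2_eq_square)
  finally show ?thesis .
qed

section \<open>The variance of the estimator\<close>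

lemma card_join_UBS:
  fixes a b :: "'u::finite \<Rightarrow> nat"
  shows "real (card (join (UBS a p1 h c1) (UBS b p2 h c2)))
    = (\<Sum>v\<in>UNIV. of_bool (h v < min p1 p2) * (coin_count a v c1 * coin_count b v c2))"
proof -
  define S where "S = (SIGMA v:{v. h v < min p1 p2}. {i. i < a v \<and> c1 (v, i)} \<times> {j. j < b v \<and> c2 (v, j)})"
  define pair where "pair = (\<lambda>(v::'u, i::nat, j::nat). ((v, i), (v, j)))"
  have "join (UBS a p1 h c1) (UBS b p2 h c2) = pair ` S"
    by (force simp: join_def UBS_def tuples_def S_def pair_def image_iff)
  moreover have "inj_on pair S" by (auto simp: inj_on_def pair_def)
  ultimately have "card (join (UBS a p1 h c1) (UBS b p2 h c2)) = card S"
    by (simp add: card_image)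
  also have "\<dots> = (\<Sum>v | h v < min p1 p2. card {i. i < a v \<and> c1 (v, i)} * card {j. j < b v \<and> c2 (v, j)})"
    unfolding S_def by (subst card_SigmaI) (auto simp: card_cartesian_product)
  finally show ?thesis
    by (simp add: coin_count_eq_card sum.If_cases)
qed

definition pair_count :: "('u \<Rightarrow> nat) \<Rightarrow> ('u \<Rightarrow> nat) \<Rightarrow> real \<Rightarrow> 'u \<Rightarrow>
    ('u \<Rightarrow> real) \<times> ('u \<times> nat \<Rightarrow> bool) \<times> ('u \<times> nat \<Rightarrow> bool) \<Rightarrow> real" where
  "pair_count a b m v \<omega> =
     of_bool (fst \<omega> v < m) * (coin_count a v (fst (snd \<omega>)) * coin_count b v (snd (snd \<omega>)))"

lemma J_count_eq:
  fixes a b :: "'u::finite \<Rightarrow> nat"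
  shows "J_count a b p1 q1 p2 q2 \<omega> = (\<Sum>v\<in>UNIV. pair_count a b (min p1 p2) v \<omega>) / (min p1 p2 * q1 * q2)"
  by (cases \<omega>) (simp add: J_count_def card_join_UBS pair_count_def)

lemma integrable_pair_count:
  fixes a b :: "'u::finite \<Rightarrow> nat"
  shows "integrable (ubs_space a b q1 q2) (pair_count a b m v)"
  unfolding ubs_space_def pair_count_def[abs_def]
  by (rule integrable_pair_measure_mult3[where Cf=1])
    (auto intro: prob_space_hash_space prob_space_coin_space measurable_coin_count coin_count_bounded)

lemma integral_pair_count:
  fixes a b :: "'u::finite \<Rightarrow> nat"
  assumes "0 \<le> m" "m \<le> 1" "0 \<le> q1" "q1 \<le> 1" "0 \<le> q2" "q2 \<le> 1"
  shows "(\<integral>\<omega>. pair_count a b m v \<omega> \<partial>ubs_space a b q1 q2) = m * (real (a v) * q1) * (real (b v) * q2)"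
  unfolding ubs_space_def pair_count_def using assms
  by (subst integral_pair_measure_mult3[where Cf=1])
    (auto intro: prob_space_hash_space prob_space_coin_space measurable_coin_count coin_count_bounded
      simp: integral_hash_below integral_coin_count)

lemma pair_count_mult_eq:
  "pair_count a b m v \<omega> * pair_count a b m w \<omega>
    = (of_bool (fst \<omega> v < m) * of_bool (fst \<omega> w < m))
      * ((coin_count a v (fst (snd \<omega>)) * coin_count a w (fst (snd \<omega>)))
        * (coin_count b v (snd (snd \<omega>)) * coin_count b w (snd (snd \<omega>))))"
  by (simp add: pair_count_def ac_simps)

lemma coin_count_mult_bounded: "\<bar>coin_count a v c * coin_count a w c\<bar> \<le> real (a v) * real (a w)"
  by (simp add: abs_mult mult_mono coin_count_bounded)

lemma integrable_pair_count_mult: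
  fixes a b :: "'u::finite \<Rightarrow> nat"
  shows "integrable (ubs_space a b q1 q2) (\<lambda>\<omega>. pair_count a b m v \<omega> * pair_count a b m w \<omega>)"
  unfolding ubs_space_def pair_count_mult_eq
  by (rule integrable_pair_measure_mult3[where Cf=1])
    (auto intro!: prob_space_hash_space prob_space_coin_space borel_measurable_times
      measurable_coin_count coin_count_mult_bounded)

lemma integral_pair_count_mult:
  fixes a b :: "'u::finite \<Rightarrow> nat"
  assumes "0 \<le> m" "m \<le> 1" "0 \<le> q1" "q1 \<le> 1" "0 \<le> q2" "q2 \<le> 1"
  shows "(\<integral>\<omega>. pair_count a b m v \<omega> * pair_count a b m w \<omega> \<partial>ubs_space a b q1 q2)
    = (if v = w then m else m\<^sup>2)
      * (real (a v) * real (a w) * q1\<^sup>2 + (if v = w then real (a v) * q1 * (1 - q1) else 0))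
      * (real (b v) * real (b w) * q2\<^sup>2 + (if v = w then real (b v) * q2 * (1 - q2) else 0))"
  unfolding ubs_space_def pair_count_mult_eq using assms
  by (subst integral_pair_measure_mult3[where Cf=1])
    (auto intro!: prob_space_hash_space prob_space_coin_space borel_measurable_times
      measurable_coin_count coin_count_mult_bounded
      simp: integral_hash_below_mult integral_coin_count_mult)

lemma var_J_count_eq:
  fixes a b :: "'u::finite \<Rightarrow> nat"
  assumes p: "0 < p1" "p1 \<le> 1" "0 < p2" "p2 \<le> 1" and q: "0 < q1" "q1 \<le> 1" "0 < q2" "q2 \<le> 1"
  shows "var_J_count a b p1 q1 p2 q2
    = (\<Sum>v\<in>UNIV. ((real (a v))\<^sup>2 + real (a v) / q1 - real (a v))
          * ((real (b v))\<^sup>2 + real (b v) / q2 - real (b v))) / min p1 p2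
      - gamma a b 2 2"
proof -
  define m where "m = min p1 p2"
  have m: "0 < m" "m \<le> 1" using p by (auto simp: m_def)
  interpret prob_space "ubs_space a b q1 q2"
    unfolding ubs_space_def by (intro prob_space_pair prob_space_hash_space prob_space_coin_space)
  have int: "integrable (ubs_space a b q1 q2) (pair_count a b m v)"
    and int2: "integrable (ubs_space a b q1 q2)
      (\<lambda>\<omega>. pair_count a b m v \<omega> * pair_count a b m w \<omega>)" for v w
    by (simp_all add: integrable_pair_count integrable_pair_count_mult)
  have uncorrelated: "expectation (\<lambda>\<omega>. pair_count a b m v \<omega> * pair_count a b m w \<omega>)
      = expectation (pair_count a b m v) * expectation (pair_count a b m w)" if "v \<noteq> w" for v w
    using m q that by (simp add: integral_pair_count integral_pair_count_mult power2_eq_square)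
  have variance_pair_count: "variance (pair_count a b m v)
      = m * ((real (a v))\<^sup>2 * q1\<^sup>2 + real (a v) * q1 * (1 - q1))
          * ((real (b v))\<^sup>2 * q2\<^sup>2 + real (b v) * q2 * (1 - q2))
        - (m * (real (a v) * q1) * (real (b v) * q2))\<^sup>2" for v
    using m q variance_eq[OF int int2[of v v, folded power2_eq_square]]
    by (simp add: integral_pair_count integral_pair_count_mult power2_eq_square)
  have variance_sum: "variance (\<lambda>\<omega>. \<Sum>v\<in>UNIV. pair_count a b m v \<omega>)
      = (\<Sum>v\<in>UNIV. variance (pair_count a b m v))"
    by (rule variance_sum_uncorrelated) (simp_all add: int int2 uncorrelated)
  have "var_J_count a b p1 q1 p2 q2 = variance (\<lambda>\<omega>. \<Sum>v\<in>UNIV. pair_count a b m v \<omega>) / (m * q1 * q2)\<^sup>2"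
    unfolding var_J_count_def J_count_eq[abs_def] m_def by (rule variance_divide)
  also have "\<dots> = (\<Sum>v\<in>UNIV. variance (pair_count a b m v) / (m * q1 * q2)\<^sup>2)"
    by (simp only: variance_sum sum_divide_distrib)
  also have "\<dots> = (\<Sum>v\<in>UNIV. ((real (a v))\<^sup>2 + real (a v) / q1 - real (a v))
      * ((real (b v))\<^sup>2 + real (b v) / q2 - real (b v)) / m - (real (a v))\<^sup>2 * (real (b v))\<^sup>2)"
    unfolding variance_pair_count using m q by (intro sum.cong refl) (simp add: field_simps power2_eq_square)
  finally show ?thesis
    by (simp add: sum_subtractf sum_divide_distrib gamma_def m_def power_mult_distrib)
qed

section \<open>Optimal sampling parameters\<close>

lemma power2_minus_self_nonneg: "0 \<le> (real n)\<^sup>2 - real n"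
  using le_square[of n] by (simp add: power2_eq_square flip: of_nat_mult)

definition ubs_weight :: "nat \<Rightarrow> real \<Rightarrow> real \<Rightarrow> real" where
  "ubs_weight n eps p = real n / eps + ((real n)\<^sup>2 - real n) / p"

lemma ubs_weight_nonneg: "0 < eps \<Longrightarrow> 0 < p \<Longrightarrow> 0 \<le> ubs_weight n eps p"
  using power2_minus_self_nonneg[of n] by (simp add: ubs_weight_def)

lemma ubs_weight_antimono: "0 < p \<Longrightarrow> p \<le> p' \<Longrightarrow> ubs_weight n eps p' \<le> ubs_weight n eps p"
  using power2_minus_self_nonneg[of n] by (simp add: ubs_weight_def divide_left_mono)

lemma var_J_count_budget_eq:
  fixes a b :: "'u::finite \<Rightarrow> nat"
  assumes p: "0 < p1" "p1 \<le> 1" "0 < p2" "p2 \<le> 1" and q: "0 < q1" "q1 \<le> 1" "0 < q2" "q2 \<le> 1"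
    and eps: "p1 * q1 = eps1" "p2 * q2 = eps2"
  shows "var_J_count a b p1 q1 p2 q2
    = max p1 p2 * (\<Sum>v\<in>UNIV. ubs_weight (a v) eps1 p1 * ubs_weight (b v) eps2 p2) - gamma a b 2 2"
proof -
  have weight: "(real n)\<^sup>2 + real n / q1 - real n = p1 * ubs_weight n eps1 p1"
    "(real n)\<^sup>2 + real n / q2 - real n = p2 * ubs_weight n eps2 p2" for n
    using p q by (auto simp: ubs_weight_def field_simps simp flip: eps)
  have "var_J_count a b p1 q1 p2 q2 = (\<Sum>v\<in>UNIV. (p1 * ubs_weight (a v) eps1 p1) * (p2 * ubs_weight (b v) eps2 p2))
      / min p1 p2 - gamma a b 2 2"
    by (simp add: var_J_count_eq p q weight)
  also have "\<dots> = p1 * p2 / min p1 p2 * (\<Sum>v\<in>UNIV. ubs_weight (a v) eps1 p1 * ubs_weight (b v) eps2 p2)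
      - gamma a b 2 2"
    by (simp add: sum_distrib_left sum_divide_distrib mult_ac)
  also have "p1 * p2 / min p1 p2 = max p1 p2"
    using p by (simp add: min_def max_def)
  finally show ?thesis .
qed

lemma gamma_excess_eq:
  "gamma a b 2 2 - gamma a b 1 2 - gamma a b 2 1 + gamma a b 1 1
    = (\<Sum>v\<in>UNIV. ((real (a v))\<^sup>2 - real (a v)) * ((real (b v))\<^sup>2 - real (b v)))"
  by (simp add: gamma_def algebra_simps sum.distrib sum_subtractf)

lemma gamma_excess_nonneg: "0 \<le> gamma a b 2 2 - gamma a b 1 2 - gamma a b 2 1 + gamma a b 1 1"
  unfolding gamma_excess_eq by (intro sum_nonneg mult_nonneg_nonneg power2_minus_self_nonneg)

lemma ubs_weight_diagonal_eq:
  fixes a b :: "'u::finite \<Rightarrow> nat"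
  assumes "0 < t" "eps1 \<noteq> 0" "eps2 \<noteq> 0"
  shows "t * (\<Sum>v\<in>UNIV. ubs_weight (a v) eps1 t * ubs_weight (b v) eps2 t)
    = gamma a b 1 1 / (eps1 * eps2) * t
      + (gamma a b 2 2 - gamma a b 1 2 - gamma a b 2 1 + gamma a b 1 1) / t
      + ((gamma a b 1 2 - gamma a b 1 1) / eps1 + (gamma a b 2 1 - gamma a b 1 1) / eps2)"
proof -
  define A where "A n = (real n)\<^sup>2 - real n" for n :: nat
  have excess12: "gamma a b 1 2 - gamma a b 1 1 = (\<Sum>v\<in>UNIV. real (a v) * A (b v))"
    and excess21: "gamma a b 2 1 - gamma a b 1 1 = (\<Sum>v\<in>UNIV. A (a v) * real (b v))"
    by (simp_all add: A_def gamma_def algebra_simps sum_subtractf)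
  have summand: "t * (ubs_weight m eps1 t * ubs_weight n eps2 t)
      = (real m * real n) * (t / (eps1 * eps2)) + (A m * A n) * (1 / t)
        + ((real m * A n) * (1 / eps1) + (A m * real n) * (1 / eps2))" for m n
    using assms by (simp add: ubs_weight_def A_def field_simps)
  have "t * (\<Sum>v\<in>UNIV. ubs_weight (a v) eps1 t * ubs_weight (b v) eps2 t)
      = (\<Sum>v\<in>UNIV. real (a v) * real (b v)) * (t / (eps1 * eps2)) + (\<Sum>v\<in>UNIV. A (a v) * A (b v)) * (1 / t)
        + ((\<Sum>v\<in>UNIV. real (a v) * A (b v)) * (1 / eps1) + (\<Sum>v\<in>UNIV. A (a v) * real (b v)) * (1 / eps2))"
    by (simp add: sum_distrib_left summand sum.distrib sum_distrib_right sum_divide_distrib)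
  then show ?thesis
    unfolding gamma_excess_eq excess12 excess21 by (simp add: A_def gamma_def)
qed

lemma ubs_weight_sum_antimono:
  fixes a b :: "'u::finite \<Rightarrow> nat"
  assumes "0 < eps1" "0 < eps2" "0 < p1" "p1 \<le> p1'" "0 < p2" "p2 \<le> p2'"
  shows "(\<Sum>v\<in>UNIV. ubs_weight (a v) eps1 p1' * ubs_weight (b v) eps2 p2')
    \<le> (\<Sum>v\<in>UNIV. ubs_weight (a v) eps1 p1 * ubs_weight (b v) eps2 p2)"
  using assms
  by (intro sum_mono mult_mono ubs_weight_antimono ubs_weight_nonneg) auto

lemma clamped_sqrt_minimizes:
  fixes \<alpha> c l t :: real
  assumes \<alpha>: "0 < \<alpha>" and c: "0 \<le> c" and t: "0 < l" "l \<le> t" "t \<le> 1"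
  defines "p \<equiv> min 1 (max l (sqrt (c / \<alpha>)))"
  shows "\<alpha> * p + c / p \<le> \<alpha> * t + c / t"
proof -
  define s where "s = sqrt (c / \<alpha>)"
  have s: "0 \<le> s" "c = \<alpha> * s\<^sup>2"
    using \<alpha> c by (simp_all add: s_def)
  have key: "0 \<le> (t - p) * (\<alpha> * t * p - c)"
  proof -
    consider "s \<le> l" | "l < s" "s \<le> 1" | "1 < s" by linarith
    then show ?thesis
    proof cases
      case 1
      then have "p = l" using t by (simp add: p_def s_def[symmetric])
      have "s * s \<le> t * l" using 1 s t by (intro mult_mono) auto
      then have "c \<le> \<alpha> * t * p" using \<alpha> s \<open>p = l\<close> by (simp add: power2_eq_square)
      then show ?thesis using t \<open>p = l\<close> by simp
    next
      case 2
      then have "p = s" by (simp add: p_def s_def[symmetric])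
      then have "(t - p) * (\<alpha> * t * p - c) = \<alpha> * s * (t - s)\<^sup>2"
        using s by (simp add: power2_eq_square algebra_simps)
      then show ?thesis using \<alpha> s by simp
    next
      case 3
      then have "p = 1" by (simp add: p_def s_def[symmetric])
      have "1 * 1 \<le> s * s" using 3 by (intro mult_mono) auto
      then have "\<alpha> * t \<le> c" using \<alpha> s t by (simp add: power2_eq_square)
      then show ?thesis using t \<open>p = 1\<close> by (simp add: mult_nonpos_nonpos)
    qed
  qed
  have "0 < p" using t by (simp add: p_def)
  with key t have "0 \<le> (t - p) * (\<alpha> * t * p - c) / (t * p)" by simp
  also have "\<dots> = \<alpha> * t + c / t - (\<alpha> * p + c / p)"
    using t \<open>0 < p\<close> by (simp add: field_simps)
  finally show ?thesis by simp
qed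

lemma ubs_weight_diagonal_min:
  fixes a b :: "'u::finite \<Rightarrow> nat"
  assumes "gamma a b 1 1 > 0" "0 < eps1" "0 < eps2" "max eps1 eps2 \<le> t" "t \<le> 1"
  defines "p \<equiv> min 1 (max eps1 (max eps2
              (sqrt (eps1 * eps2 * (gamma a b 2 2 - gamma a b 1 2 - gamma a b 2 1 + gamma a b 1 1)
                     / gamma a b 1 1))))"
  shows "p * (\<Sum>v\<in>UNIV. ubs_weight (a v) eps1 p * ubs_weight (b v) eps2 p)
    \<le> t * (\<Sum>v\<in>UNIV. ubs_weight (a v) eps1 t * ubs_weight (b v) eps2 t)"
proof -
  define \<alpha> where "\<alpha> = gamma a b 1 1 / (eps1 * eps2)"
  define c where "c = gamma a b 2 2 - gamma a b 1 2 - gamma a b 2 1 + gamma a b 1 1"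
  have \<alpha>: "0 < \<alpha>"
    using assms(1-3) by (simp add: \<alpha>_def)
  have c: "0 \<le> c"
    using gamma_excess_nonneg by (simp add: c_def)
  have "eps1 * eps2 * c / gamma a b 1 1 = c / \<alpha>"
    by (simp add: \<alpha>_def)
  then have p_clamp: "p = min 1 (max (max eps1 eps2) (sqrt (c / \<alpha>)))"
    by (simp add: p_def c_def max.assoc)
  have "0 < p" "0 < t"
    using assms(2-4) by (auto simp: p_def)
  then show ?thesis
    using clamped_sqrt_minimizes[OF \<alpha> c _ assms(4,5)] assms(2,3)
    by (simp add: ubs_weight_diagonal_eq p_clamp \<alpha>_def c_def)
qed

theorem theorem5:
  fixes a b :: "'u::finite \<Rightarrow> nat" and eps1 eps2 :: real
  assumes "gamma a b 1 1 > 0"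
    and "0 < eps1" "eps1 \<le> 1" "0 < eps2" "eps2 \<le> 1"
  defines "p \<equiv> min 1 (max eps1 (max eps2
              (sqrt (eps1 * eps2 * (gamma a b 2 2 - gamma a b 1 2 - gamma a b 2 1 + gamma a b 1 1)
                     / gamma a b 1 1))))"
  shows "\<forall>p1 q1 p2 q2. 0 < p1 \<and> p1 \<le> 1 \<and> 0 < q1 \<and> q1 \<le> 1 \<and> 0 < p2 \<and> p2 \<le> 1 \<and>
            0 < q2 \<and> q2 \<le> 1 \<and> p1 * q1 = eps1 \<and> p2 * q2 = eps2 \<longrightarrow>
           var_J_count a b p (eps1 / p) p (eps2 / p) \<le> var_J_count a b p1 q1 p2 q2"
proof (intro allI impI)
  fix p1 q1 p2 q2 :: real
  assume h: "0 < p1 \<and> p1 \<le> 1 \<and> 0 < q1 \<and> q1 \<le> 1 \<and> 0 < p2 \<and> p2 \<le> 1 \<and>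
            0 < q2 \<and> q2 \<le> 1 \<and> p1 * q1 = eps1 \<and> p2 * q2 = eps2"
  note eps = assms(2-5)
  define W where "W x y = (\<Sum>v\<in>UNIV. ubs_weight (a v) eps1 x * ubs_weight (b v) eps2 y)" for x y
  define t where "t = max p1 p2"
  have "eps1 \<le> p1" "eps2 \<le> p2"
    using h mult_left_le[of q1 p1] mult_left_le[of q2 p2] by auto
  then have t_lower: "max eps1 eps2 \<le> t"
    unfolding t_def by (rule max.mono)
  have t_upper: "t \<le> 1"
    using h by (simp add: t_def)
  have p: "eps1 \<le> p" "eps2 \<le> p" "p \<le> 1"
    using eps by (auto simp: p_def)
  have "var_J_count a b p (eps1 / p) p (eps2 / p) = p * W p p - gamma a b 2 2"
    using var_J_count_budget_eq[of p p "eps1 / p" "eps2 / p" eps1 eps2 a b] p eps by (simp add: W_def)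
  also have "\<dots> \<le> t * W t t - gamma a b 2 2"
    using ubs_weight_diagonal_min[OF assms(1) _ _ t_lower t_upper] eps unfolding W_def p_def by simp
  also have "\<dots> \<le> t * W p1 p2 - gamma a b 2 2"
    using ubs_weight_sum_antimono[of eps1 eps2 p1 t p2 t a b] h eps
    unfolding W_def t_def by (auto intro!: mult_left_mono)
  also have "\<dots> = var_J_count a b p1 q1 p2 q2"
    using var_J_count_budget_eq[of p1 p2 q1 q2 eps1 eps2 a b] h by (simp add: W_def t_def)
  finally show "var_J_count a b p (eps1 / p) p (eps2 / p) \<le> var_J_count a b p1 q1 p2 q2" .
qed

end
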